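(* Let $\mathbb M=(V,d)$ be a binary structure and let $X,Y$ be disjoint non-empty modules of $\mathbb M$. Suppose $Y$ is a robust module with at least two elements whose Gallai quotient is not prime and such that $\{d(X,Y),d(Y,X)\}=t(Y)$. Then $X\cup Y$ is not a module of $\mathbb M$.
   Context: A binary structure over a set $W$ is a pair $\mathbb M=(V,d)$ with $d:V\times V\to W$. A module of $\mathbb M$ is a set $A\subseteq V$ such that $d(x,y)=d(x,y')$ and $d(y,x)=d(y',x)$ for all $x\in V\setminus A$ and $y,y'\in A$. A module is strong if for every module $B$, either $A\subseteq B$, $B\subseteq A$, or $A\cap B=\emptyset$. For $Z\subseteq V$, $S_{\mathbb M}(Z)$ is the intersection of all strong modules containing $Z$. A module is robust if it is a singleton or equals $S_{\mathbb M}(\{x,y\})$ for some distinct $x,y\in V$. For disjoint non-empty modules $X,Y$, $d(X,Y)$ denotes the common value of $d(x,y)$ for $x\in X$, $y\in Y$. For a strong module $A$ and $x,y\in A$, put $x\equiv_A y$ iff $x=y$ or some strong module containing $x,y$ is properly contained in $A$; the classes (components of $A$) are modules, and a robust $A$ with $|A|\ge 2$ has at least two components. The Gallai quotient of such $A$ is the binary structure on its set of components given by $(I,J)\mapsto d(I,J)$ for $I\ne J$; it is prime if it has at least three elements and only trivial modules (empty, singletons, whole set). If the Gallai quotient of $A$ is not prime, the type of $A$ is $t(A)=\{d(I,J): I,J$ distinct components of $A\}$. *)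

theory Defs
  imports Main
begin

text \<open>A binary structure is a pair (V, d) with d : V x V -> W; here V :: 'a set and
  d :: 'a => 'a => 'w (values of d outside V x V are irrelevant).\<close>

definition is_module :: "'a set \<Rightarrow> ('a \<Rightarrow> 'a \<Rightarrow> 'w) \<Rightarrow> 'a set \<Rightarrow> bool" where
  "is_module V d A \<longleftrightarrow> A \<subseteq> V \<and>
     (\<forall>x\<in>V - A. \<forall>y\<in>A. \<forall>y'\<in>A. d x y = d x y' \<and> d y x = d y' x)"

definition strong_module :: "'a set \<Rightarrow> ('a \<Rightarrow> 'a \<Rightarrow> 'w) \<Rightarrow> 'a set \<Rightarrow> bool" where
  "strong_module V d A \<longleftrightarrow> is_module V d A \<and>
     (\<forall>B. is_module V d B \<longrightarrow> A \<subseteq> B \<or> B \<subseteq> A \<or> A \<inter> B = {})"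

definition S_hull :: "'a set \<Rightarrow> ('a \<Rightarrow> 'a \<Rightarrow> 'w) \<Rightarrow> 'a set \<Rightarrow> 'a set" where
  "S_hull V d Z = \<Inter> {A. strong_module V d A \<and> Z \<subseteq> A}"

definition robust_module :: "'a set \<Rightarrow> ('a \<Rightarrow> 'a \<Rightarrow> 'w) \<Rightarrow> 'a set \<Rightarrow> bool" where
  "robust_module V d A \<longleftrightarrow>
     (\<exists>x\<in>V. A = {x}) \<or> (\<exists>x\<in>V. \<exists>y\<in>V. x \<noteq> y \<and> A = S_hull V d {x, y})"

text \<open>d(X,Y): the common value of d(x,y) for x in X, y in Y (taken at chosen representatives).\<close>
definition dset :: "('a \<Rightarrow> 'a \<Rightarrow> 'w) \<Rightarrow> 'a set \<Rightarrow> 'a set \<Rightarrow> 'w" where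
  "dset d X Y = d (SOME x. x \<in> X) (SOME y. y \<in> Y)"

definition comp_equiv :: "'a set \<Rightarrow> ('a \<Rightarrow> 'a \<Rightarrow> 'w) \<Rightarrow> 'a set \<Rightarrow> 'a \<Rightarrow> 'a \<Rightarrow> bool" where
  "comp_equiv V d A x y \<longleftrightarrow> x \<in> A \<and> y \<in> A \<and>
     (x = y \<or> (\<exists>B. strong_module V d B \<and> x \<in> B \<and> y \<in> B \<and> B \<subset> A))"

definition components :: "'a set \<Rightarrow> ('a \<Rightarrow> 'a \<Rightarrow> 'w) \<Rightarrow> 'a set \<Rightarrow> 'a set set" where
  "components V d A = {{y. comp_equiv V d A x y} | x. x \<in> A}"

definition gallai_prime :: "'a set \<Rightarrow> ('a \<Rightarrow> 'a \<Rightarrow> 'w) \<Rightarrow> 'a set \<Rightarrow> bool" where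
  "gallai_prime V d A \<longleftrightarrow>
     (let C = components V d A in
       (\<exists>I J K. I \<in> C \<and> J \<in> C \<and> K \<in> C \<and> I \<noteq> J \<and> I \<noteq> K \<and> J \<noteq> K) \<and>
       (\<forall>\<A>. is_module C (dset d) \<A> \<longrightarrow> \<A> = {} \<or> (\<exists>I. \<A> = {I}) \<or> \<A> = C))"

definition gtype :: "'a set \<Rightarrow> ('a \<Rightarrow> 'a \<Rightarrow> 'w) \<Rightarrow> 'a set \<Rightarrow> 'w set" where
  "gtype V d A = {dset d I J | I J. I \<in> components V d A \<and> J \<in> components V d A \<and> I \<noteq> J}"

end

theory Submission
  imports Defs
begin

text \<open>
  If X \<union> Y were a module, every proper non-empty U \<subset> Y with d(U, Y - U) = d(X, Y) and
  d(Y - U, U) = d(Y, X) would make X \<union> U a module overlapping the strong module Y.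
  Such a U exists. As the Gallai quotient of Y is not prime, Y is the union of two modules M
  and N that are unions of components, with M - N and N - M non-empty: either Y has just two
  components, or a non-trivial module of the quotient lifts to a module of the structure, and
  largest modules separating two points then yield M and N. The values \<alpha> = d(M - N, N) and
  \<beta> = d(N, M - N) are constant and lie in t(Y). If \<alpha> \<noteq> \<beta>, then U = M - N or U = N - M
  works. If \<alpha> = \<beta>, consider the graph on Y joining equivalent points and pairs not valued \<alpha>
  in both directions: its connected components are strong modules, and none of them meets
  both M - N and its complement, so all of them lie inside single components of Y. Hence
  t(Y) = {\<alpha>}, and U = M - N works again.
\<close>

section \<open>Modules and strong modules\<close>

lemma is_module_subset: "is_module V d A \<Longrightarrow> A \<subseteq> V"
  by (simp add: is_module_def)

lemma is_module_eq_into: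
  "is_module V d A \<Longrightarrow> z \<in> V \<Longrightarrow> z \<notin> A \<Longrightarrow> u \<in> A \<Longrightarrow> u' \<in> A \<Longrightarrow> d z u = d z u'"
  unfolding is_module_def by blast

lemma is_module_eq_out_of:
  "is_module V d A \<Longrightarrow> z \<in> V \<Longrightarrow> z \<notin> A \<Longrightarrow> u \<in> A \<Longrightarrow> u' \<in> A \<Longrightarrow> d u z = d u' z"
  unfolding is_module_def by blast

lemma is_moduleD:
  "is_module V d A \<Longrightarrow> z \<in> V \<Longrightarrow> z \<notin> A \<Longrightarrow> u \<in> A \<Longrightarrow> u' \<in> A
    \<Longrightarrow> d z u = d z u' \<and> d u z = d u' z"
  unfolding is_module_def by blast

lemma is_moduleI:
  assumes "A \<subseteq> V"
    and "\<And>z u u'. z \<in> V \<Longrightarrow> z \<notin> A \<Longrightarrow> u \<in> A \<Longrightarrow> u' \<in> A \<Longrightarrow> d z u = d z u' \<and> d u z = d u' z"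
  shows "is_module V d A"
  using assms unfolding is_module_def by blast

lemma is_module_whole: "is_module V d V"
  unfolding is_module_def by auto

lemma is_module_singleton: "x \<in> V \<Longrightarrow> is_module V d {x}"
  unfolding is_module_def by auto

lemma is_module_Union:
  assumes "\<And>Z. Z \<in> F \<Longrightarrow> is_module V d Z \<and> c \<in> Z"
  shows "is_module V d (\<Union>F)"
proof (rule is_moduleI)
  show "\<Union>F \<subseteq> V" using assms is_module_subset by blast
next
  fix z u u' assume z: "z \<in> V" "z \<notin> \<Union>F" and "u \<in> \<Union>F" "u' \<in> \<Union>F"
  then obtain Z Z' where Z: "Z \<in> F" "u \<in> Z" and Z': "Z' \<in> F" "u' \<in> Z'" by blast
  have "z \<notin> Z" "z \<notin> Z'" using z Z Z' by blast+
  then have "d z u = d z c \<and> d u z = d c z" "d z u' = d z c \<and> d u' z = d c z"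
    using assms[OF Z(1)] assms[OF Z'(1)] is_moduleD[OF _ z(1)] Z Z' by blast+
  then show "d z u = d z u' \<and> d u z = d u' z" by simp
qed

lemma is_module_Un:
  assumes "is_module V d A" "is_module V d B" "A \<inter> B \<noteq> {}"
  shows "is_module V d (A \<union> B)"
proof -
  obtain c where "c \<in> A" "c \<in> B" using assms(3) by blast
  with assms have "is_module V d (\<Union>{A, B})" by (intro is_module_Union[of _ _ _ c]) blast
  then show ?thesis by simp
qed

lemma is_module_Diff:
  assumes A: "is_module V d A" and B: "is_module V d B" and "\<not> B \<subseteq> A"
  shows "is_module V d (A - B)"
proof (rule is_moduleI)
  show "A - B \<subseteq> V" using A is_module_subset by blast
next
  fix z u u' assume z: "z \<in> V" "z \<notin> A - B" and u: "u \<in> A - B" "u' \<in> A - B"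
  show "d z u = d z u' \<and> d u z = d u' z"
  proof (cases "z \<in> A")
    case False
    with z u show ?thesis using is_moduleD[OF A] by blast
  next
    case True
    with z have zB: "z \<in> B" by blast
    obtain b where b: "b \<in> B" "b \<notin> A" using \<open>\<not> B \<subseteq> A\<close> by blast
    have bV: "b \<in> V" using B b is_module_subset by blast
    have uV: "u \<in> V" "u' \<in> V" using A u is_module_subset by blast+
    have "d u z = d u b \<and> d z u = d b u" "d u' z = d u' b \<and> d z u' = d b u'"
      using is_moduleD[OF B uV(1) _ zB b(1)] is_moduleD[OF B uV(2) _ zB b(1)] u by blast+
    moreover have "d b u = d b u' \<and> d u b = d u' b"
      using is_moduleD[OF A bV b(2)] u by blast
    ultimately show ?thesis by simp
  qed
qed

lemma strong_moduleD:
  "strong_module V d A \<Longrightarrow> is_module V d B \<Longrightarrow> A \<subseteq> B \<or> B \<subseteq> A \<or> A \<inter> B = {}"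
  unfolding strong_module_def by blast

lemma strong_module_imp_module: "strong_module V d A \<Longrightarrow> is_module V d A"
  unfolding strong_module_def by blast

lemma strong_module_singleton: "x \<in> V \<Longrightarrow> strong_module V d {x}"
  unfolding strong_module_def by (auto simp: is_module_singleton)

lemma strong_module_S_hull:
  assumes "Z \<subseteq> V"
  shows "strong_module V d (S_hull V d Z)"
proof -
  define F where "F = {A. strong_module V d A \<and> Z \<subseteq> A}"
  have "strong_module V d V"
    unfolding strong_module_def using is_module_whole is_module_subset by blast
  with assms have "V \<in> F" unfolding F_def by blast
  have "is_module V d (\<Inter>F)"
  proof (rule is_moduleI)
    show "\<Inter>F \<subseteq> V" using \<open>V \<in> F\<close> by blast
  next
    fix z u u' assume z: "z \<in> V" "z \<notin> \<Inter>F" and u: "u \<in> \<Inter>F" "u' \<in> \<Inter>F"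
    then obtain A where A: "A \<in> F" "z \<notin> A" by blast
    then have "is_module V d A" unfolding F_def using strong_module_imp_module by blast
    then show "d z u = d z u' \<and> d u z = d u' z"
      using is_moduleD[OF _ z(1) A(2)] u A(1) by blast
  qed
  moreover have "\<Inter>F \<subseteq> B \<or> B \<subseteq> \<Inter>F \<or> \<Inter>F \<inter> B = {}" if B: "is_module V d B" for B
  proof (cases "\<exists>A\<in>F. A \<subseteq> B")
    case False
    have "B \<subseteq> A \<or> A \<inter> B = {}" if "A \<in> F" for A
      using False that strong_moduleD[OF _ B, of A] unfolding F_def by blast
    then show ?thesis by blast
  qed blast
  ultimately have "strong_module V d (\<Inter>F)" unfolding strong_module_def by blast
  then show ?thesis unfolding S_hull_def F_def .
qed

lemma robust_module_imp_strong: "robust_module V d A \<Longrightarrow> strong_module V d A"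
  unfolding robust_module_def using strong_module_singleton strong_module_S_hull
  by (metis empty_subsetI insert_subset)

lemma dset_modules:
  assumes X: "is_module V d X" and Y: "is_module V d Y" and "X \<inter> Y = {}"
    and x: "x \<in> X" and y: "y \<in> Y"
  shows "dset d X Y = d x y"
proof -
  define x0 where "x0 = (SOME x. x \<in> X)"
  define y0 where "y0 = (SOME y. y \<in> Y)"
  have x0: "x0 \<in> X" unfolding x0_def using x by (rule someI)
  have y0: "y0 \<in> Y" unfolding y0_def using y by (rule someI)
  have "x0 \<in> V" "x0 \<notin> Y" "y \<in> V" "y \<notin> X"
    using assms x0 is_module_subset by blast+
  then have "d x0 y0 = d x0 y" "d x0 y = d x y"
    using is_module_eq_into[OF Y _ _ y0 y] is_module_eq_out_of[OF X _ _ x0 x] by simp_all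
  then show ?thesis unfolding dset_def x0_def[symmetric] y0_def[symmetric] by simp
qed

lemma d_across_modules:
  assumes M: "is_module V d M" and N: "is_module V d N"
    and "x \<in> M" "y \<in> N" "x \<notin> N \<or> y \<notin> M"
    and p: "p \<in> M" "p \<notin> N" and s: "s \<in> N" "s \<notin> M"
  shows "d x y = d p s \<and> d y x = d s p"
  using assms(5)
proof
  assume "x \<notin> N"
  have "x \<in> V" "s \<in> V" using M N \<open>x \<in> M\<close> s is_module_subset by blast+
  then show ?thesis
    using is_moduleD[OF N \<open>x \<in> V\<close> \<open>x \<notin> N\<close> \<open>y \<in> N\<close> s(1)]
      is_moduleD[OF M \<open>s \<in> V\<close> s(2) \<open>x \<in> M\<close> p(1)] by simp
next
  assume "y \<notin> M"
  have "y \<in> V" "p \<in> V" using M N \<open>y \<in> N\<close> p is_module_subset by blast+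
  then show ?thesis
    using is_moduleD[OF M \<open>y \<in> V\<close> \<open>y \<notin> M\<close> \<open>x \<in> M\<close> p(1)]
      is_moduleD[OF N \<open>p \<in> V\<close> p(2) \<open>y \<in> N\<close> s(1)] by simp
qed

section \<open>Largest modules separating two points\<close>

definition max_module :: "'a set \<Rightarrow> ('a \<Rightarrow> 'a \<Rightarrow> 'w) \<Rightarrow> 'a \<Rightarrow> 'a \<Rightarrow> 'a set" where
  "max_module V d a b = \<Union>{Z. is_module V d Z \<and> a \<in> Z \<and> b \<notin> Z}"

lemma is_module_max_module: "is_module V d (max_module V d a b)"
  unfolding max_module_def by (rule is_module_Union[of _ _ _ a]) simp

lemma max_module_mem:
  assumes "a \<in> V" "a \<noteq> b"
  shows "a \<in> max_module V d a b"
proof -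
  have "{a} \<in> {Z. is_module V d Z \<and> a \<in> Z \<and> b \<notin> Z}"
    using assms is_module_singleton[of a V d] by simp
  then show ?thesis unfolding max_module_def by blast
qed

lemma max_module_not_mem: "b \<notin> max_module V d a b"
  unfolding max_module_def by blast

lemma max_module_greatest:
  "is_module V d Z \<Longrightarrow> a \<in> Z \<Longrightarrow> b \<notin> Z \<Longrightarrow> Z \<subseteq> max_module V d a b"
  unfolding max_module_def by blast

lemma max_module_eq:
  assumes m: "m \<in> max_module V d a b" and "a \<in> V" "a \<noteq> b"
  shows "max_module V d m b = max_module V d a b"
proof
  let ?M = "max_module V d m b"
  have "m \<in> V" using m is_module_subset[OF is_module_max_module[of V d a b]] by blast
  moreover have "m \<noteq> b" using m max_module_not_mem[of b V d a] by blast
  ultimately have "m \<in> ?M" by (rule max_module_mem)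
  with m have "?M \<inter> max_module V d a b \<noteq> {}" by blast
  then have "is_module V d (?M \<union> max_module V d a b)"
    by (rule is_module_Un[OF is_module_max_module[of V d m b] is_module_max_module[of V d a b]])
  moreover have "a \<in> ?M \<union> max_module V d a b"
    using max_module_mem[OF \<open>a \<in> V\<close> \<open>a \<noteq> b\<close>] by blast
  moreover have "b \<notin> ?M \<union> max_module V d a b"
    using max_module_not_mem[of b V d] by blast
  ultimately have "?M \<union> max_module V d a b \<subseteq> max_module V d a b"
    by (rule max_module_greatest)
  then show "?M \<subseteq> max_module V d a b" by blast
next
  show "max_module V d a b \<subseteq> max_module V d m b"
    by (rule max_module_greatest[OF is_module_max_module[of V d a b] m max_module_not_mem])
qed

lemma strong_module_max_module_Un:
  assumes "m \<in> V" "y \<in> V" "m \<noteq> y"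
    and meet: "max_module V d m y \<inter> max_module V d y m \<noteq> {}"
  shows "strong_module V d (max_module V d m y \<union> max_module V d y m)"
proof -
  let ?M = "max_module V d m y" and ?N = "max_module V d y m"
  have M: "is_module V d ?M" and N: "is_module V d ?N" by (rule is_module_max_module)+
  have mM: "m \<in> ?M" "y \<notin> ?M" and yN: "y \<in> ?N" "m \<notin> ?N"
    using assms max_module_mem max_module_not_mem by metis+
  \<comment> \<open>A module B overlapping M \<union> N must contain both m and y by maximality of M and N;
    then B - M or B - N is a module contradicting maximality again.\<close>
  have "?M \<union> ?N \<subseteq> B \<or> B \<subseteq> ?M \<union> ?N \<or> (?M \<union> ?N) \<inter> B = {}"
    if B: "is_module V d B" for B
  proof (rule ccontr)
    assume "\<not> ?thesis"
    then obtain e f where e: "e \<in> B" "e \<notin> ?M \<union> ?N" and f: "f \<in> ?M \<union> ?N" "f \<notin> B"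
      and B_meet: "(?M \<union> ?N) \<inter> B \<noteq> {}" by blast
    have "m \<in> B \<or> y \<in> B"
    proof (rule ccontr)
      assume none: "\<not> (m \<in> B \<or> y \<in> B)"
      from B_meet consider "?M \<inter> B \<noteq> {}" | "?N \<inter> B \<noteq> {}" by blast
      then show False
      proof cases
        case 1
        then have "?M \<union> B \<subseteq> ?M"
          using max_module_greatest[OF is_module_Un[OF M B], of m y] mM none by blast
        then show False using e by blast
      next
        case 2
        then have "?N \<union> B \<subseteq> ?N"
          using max_module_greatest[OF is_module_Un[OF N B], of y m] yN none by blast
        then show False using e by blast
      qed
    qed
    then have mB: "m \<in> B" and yB: "y \<in> B"
      using max_module_greatest[OF B, of m y] max_module_greatest[OF B, of y m] e by blast+
    show False
    proof (cases "f \<in> ?M")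
      case True
      then have "B - ?M \<subseteq> ?N"
        using max_module_greatest[OF is_module_Diff[OF B M], of y m] f mM yB by blast
      then show False using e by blast
    next
      case False
      then have "B - ?N \<subseteq> ?M"
        using max_module_greatest[OF is_module_Diff[OF B N], of m y] f yN mB by blast
      then show False using e by blast
    qed
  qed
  then show ?thesis unfolding strong_module_def using is_module_Un[OF M N meet] by blast
qed

section \<open>Components of a strong module\<close>

locale gallai_decomposition =
  fixes V :: "'a set" and d :: "'a \<Rightarrow> 'a \<Rightarrow> 'w" and Y :: "'a set"
  assumes strong_Y: "strong_module V d Y"
begin

abbreviation eqv :: "'a \<Rightarrow> 'a \<Rightarrow> bool" where
  "eqv \<equiv> comp_equiv V d Y"

definition component :: "'a \<Rightarrow> 'a set" where
  "component u = {v. eqv u v}"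

definition saturated :: "'a set \<Rightarrow> bool" where
  "saturated Z \<longleftrightarrow> (\<forall>u v. u \<in> Z \<longrightarrow> eqv u v \<longrightarrow> v \<in> Z)"

lemma module_Y: "is_module V d Y"
  using strong_Y by (rule strong_module_imp_module)

lemma Y_subset: "Y \<subseteq> V"
  using module_Y by (rule is_module_subset)

lemma eqv_in_Y: "eqv u v \<Longrightarrow> u \<in> Y \<and> v \<in> Y"
  unfolding comp_equiv_def by blast

lemma eqv_refl: "u \<in> Y \<Longrightarrow> eqv u u"
  unfolding comp_equiv_def by blast

lemma eqv_sym: "eqv u v \<Longrightarrow> eqv v u"
  unfolding comp_equiv_def by blast

lemma eqvI: "strong_module V d B \<Longrightarrow> B \<subset> Y \<Longrightarrow> u \<in> B \<Longrightarrow> v \<in> B \<Longrightarrow> eqv u v"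
  unfolding comp_equiv_def by blast

lemma eqvE:
  assumes "eqv u v" "u \<noteq> v"
  obtains B where "strong_module V d B" "B \<subset> Y" "u \<in> B" "v \<in> B"
  using assms unfolding comp_equiv_def by blast

lemma eqv_trans:
  assumes uv: "eqv u v" and vw: "eqv v w"
  shows "eqv u w"
proof (cases "u = v \<or> v = w")
  case False
  then obtain B1 B2 where B1: "strong_module V d B1" "B1 \<subset> Y" "u \<in> B1" "v \<in> B1"
    and B2: "strong_module V d B2" "B2 \<subset> Y" "v \<in> B2" "w \<in> B2"
    using uv vw eqvE by metis
  then have "B1 \<subseteq> B2 \<or> B2 \<subseteq> B1"
    using strong_moduleD[OF B1(1) strong_module_imp_module[OF B2(1)]] by blast
  then show ?thesis using eqvI[OF B1(1,2)] eqvI[OF B2(1,2)] B1(3) B2(4) by blast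
qed (use uv vw in blast)

lemma component_eq: "eqv u v \<Longrightarrow> component u = component v"
  unfolding component_def using eqv_sym eqv_trans by blast

lemma component_self: "u \<in> Y \<Longrightarrow> u \<in> component u"
  unfolding component_def using eqv_refl by blast

lemma component_subset: "component u \<subseteq> Y"
  unfolding component_def using eqv_in_Y by blast

lemma saturated_component: "saturated (component u)"
  unfolding saturated_def component_def using eqv_trans by blast

lemma saturated_Diff: "saturated M \<Longrightarrow> saturated N \<Longrightarrow> saturated (M - N)"
  unfolding saturated_def using eqv_sym by blast

lemma is_module_component:
  assumes "u \<in> Y"
  shows "is_module V d (component u)"
proof -
  let ?F = "insert {u} {B. strong_module V d B \<and> u \<in> B \<and> B \<subset> Y}"
  have "component u = \<Union>?F"
    using assms unfolding component_def comp_equiv_def by blast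
  moreover have "is_module V d (\<Union>?F)"
  proof (rule is_module_Union[of _ _ _ u])
    fix Z assume "Z \<in> ?F"
    then show "is_module V d Z \<and> u \<in> Z"
      using assms Y_subset is_module_singleton[of u V d] strong_module_imp_module by blast
  qed
  ultimately show ?thesis by simp
qed

lemma d_components:
  assumes "u \<in> Y" "v \<in> Y" "\<not> eqv u v" "u' \<in> component u" "v' \<in> component v"
  shows "d u' v' = d u v"
proof -
  have "v' \<notin> component u" "u \<notin> component v"
    using assms eqv_sym eqv_trans unfolding component_def by blast+
  moreover have "v' \<in> V" "u \<in> V"
    using assms component_subset Y_subset by blast+
  ultimately have "d u' v' = d u v'" "d u v' = d u v"
    using is_module_eq_out_of[OF is_module_component[OF \<open>u \<in> Y\<close>] \<open>v' \<in> V\<close>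
        \<open>v' \<notin> component u\<close> \<open>u' \<in> component u\<close> component_self[OF \<open>u \<in> Y\<close>]]
      is_module_eq_into[OF is_module_component[OF \<open>v \<in> Y\<close>] \<open>u \<in> V\<close>
        \<open>u \<notin> component v\<close> \<open>v' \<in> component v\<close> component_self[OF \<open>v \<in> Y\<close>]]
    by simp_all
  then show ?thesis by simp
qed

lemma dset_components:
  assumes "u \<in> Y" "v \<in> Y" "\<not> eqv u v"
  shows "dset d (component u) (component v) = d u v"
proof -
  have "(SOME x. x \<in> component u) \<in> component u" "(SOME y. y \<in> component v) \<in> component v"
    using component_self assms by (metis someI)+
  then show ?thesis unfolding dset_def by (rule d_components[OF assms])
qed

lemma components_eq: "components V d Y = component ` Y"
  unfolding components_def component_def by blast

lemma gtype_eq: "gtype V d Y = {d u v | u v. u \<in> Y \<and> v \<in> Y \<and> \<not> eqv u v}"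
proof (intro set_eqI iffI)
  fix x assume "x \<in> gtype V d Y"
  then obtain u v where "u \<in> Y" "v \<in> Y" "component u \<noteq> component v"
    and x: "x = dset d (component u) (component v)"
    unfolding gtype_def components_eq by blast
  moreover from this have "\<not> eqv u v" using component_eq by blast
  ultimately show "x \<in> {d u v | u v. u \<in> Y \<and> v \<in> Y \<and> \<not> eqv u v}"
    using dset_components by blast
next
  fix x assume "x \<in> {d u v | u v. u \<in> Y \<and> v \<in> Y \<and> \<not> eqv u v}"
  then obtain u v where uv: "u \<in> Y" "v \<in> Y" "\<not> eqv u v" and x: "x = d u v" by blast
  then have "component u \<noteq> component v"
    using component_self unfolding component_def by blast
  with uv show "x \<in> gtype V d Y"
    unfolding gtype_def components_eq x dset_components[OF uv, symmetric] by blast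
qed

lemma saturated_if_module:
  assumes Z: "is_module V d Z" and "u1 \<in> Z" "u2 \<in> Z" "\<not> eqv u1 u2"
  shows "saturated Z"
  unfolding saturated_def
proof (intro allI impI)
  fix u v assume "u \<in> Z" "eqv u v"
  show "v \<in> Z"
  proof (cases "u = v")
    case False
    obtain B where B: "strong_module V d B" "B \<subset> Y" "u \<in> B" "v \<in> B"
      using \<open>eqv u v\<close> False by (rule eqvE)
    then show ?thesis
      using strong_moduleD[OF B(1) Z] eqvI[OF B(1,2)] assms \<open>u \<in> Z\<close> by blast
  qed (use \<open>u \<in> Z\<close> in simp)
qed

definition linked :: "'w \<Rightarrow> 'a \<Rightarrow> 'a \<Rightarrow> bool" where
  "linked w u v \<longleftrightarrow> u \<in> Y \<and> v \<in> Y \<and> (eqv u v \<or> d u v \<noteq> w \<or> d v u \<noteq> w)"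

lemma linked_class_subset: "(linked w)\<^sup>*\<^sup>* i v \<Longrightarrow> i \<in> Y \<Longrightarrow> v \<in> Y"
  by (induction rule: rtranclp_induct) (auto simp: linked_def)

lemma not_linked_out_of_class:
  assumes "(linked w)\<^sup>*\<^sup>* i k" "i \<in> Y" "z \<in> Y" "\<not> (linked w)\<^sup>*\<^sup>* i z"
  shows "d k z = w \<and> d z k = w \<and> \<not> eqv k z"
  using assms linked_class_subset rtranclp.rtrancl_into_rtrancl[of "linked w" i k z]
  unfolding linked_def by blast

lemma is_module_linked_class:
  assumes "i \<in> Y"
  shows "is_module V d {v. (linked w)\<^sup>*\<^sup>* i v}" (is "is_module V d ?K")
proof (rule is_moduleI)
  show "?K \<subseteq> V" using linked_class_subset assms Y_subset by blast
next
  fix z u u' assume z: "z \<in> V" "z \<notin> ?K" and u: "u \<in> ?K" "u' \<in> ?K"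
  show "d z u = d z u' \<and> d u z = d u' z"
  proof (cases "z \<in> Y")
    case True
    with assms z u show ?thesis using not_linked_out_of_class by (metis mem_Collect_eq)
  next
    case False
    with z u show ?thesis
      using is_moduleD[OF module_Y z(1) False] linked_class_subset[OF _ assms] by blast
  qed
qed

lemma not_linked_across_module:
  assumes "i \<in> Y" and B: "is_module V d B" and b: "b \<in> B" "\<not> (linked w)\<^sup>*\<^sup>* i b"
    and u: "(linked w)\<^sup>*\<^sup>* i u" "u \<notin> B" and v: "(linked w)\<^sup>*\<^sup>* i v" "v \<in> B"
  shows "\<not> linked w u v"
proof
  assume "linked w u v"
  have "b \<in> Y" using strong_moduleD[OF strong_Y B] assms linked_class_subset by blast
  note out = not_linked_out_of_class[OF u(1) \<open>i \<in> Y\<close> this b(2)]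
  have "u \<in> V" using u linked_class_subset \<open>i \<in> Y\<close> Y_subset by blast
  then have "d u v = d u b" "d v u = d b u"
    using is_moduleD[OF B _ u(2) v(2) b(1)] by simp_all
  then have "eqv u v" using \<open>linked w u v\<close> out unfolding linked_def by auto
  moreover have "u \<noteq> v" using u v by blast
  ultimately obtain B0 where B0: "strong_module V d B0" "B0 \<subset> Y" "u \<in> B0" "v \<in> B0"
    by (rule eqvE)
  then have "B \<subseteq> B0" using strong_moduleD[OF B0(1) B] u v by blast
  then have "eqv u b" using eqvI[OF B0(1,2)] B0(3) b(1) by blast
  then show False using out by blast
qed

lemma strong_module_linked_class:
  assumes "i \<in> Y"
  shows "strong_module V d {v. (linked w)\<^sup>*\<^sup>* i v}" (is "strong_module V d ?K")
proof -
  have "?K \<subseteq> B \<or> B \<subseteq> ?K \<or> ?K \<inter> B = {}" if B: "is_module V d B" for B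
  proof (rule ccontr)
    assume "\<not> ?thesis"
    then obtain k k' b where k: "k \<in> ?K" "k \<in> B" and k': "k' \<in> ?K" "k' \<notin> B"
      and b: "b \<in> B" "b \<notin> ?K" by blast
    have "v \<in> B \<longleftrightarrow> i \<in> B" if "(linked w)\<^sup>*\<^sup>* i v" for v
      using that
    proof (induction rule: rtranclp_induct)
      case (step y z)
      then have "(linked w)\<^sup>*\<^sup>* i z" using rtranclp.rtrancl_into_rtrancl by metis
      with step show ?case
        using not_linked_across_module[OF assms B b(1), of w] b(2) eqv_sym
        unfolding linked_def by blast
    qed simp
    then show False using k k' by blast
  qed
  then show ?thesis
    unfolding strong_module_def using is_module_linked_class[OF assms] by blast
qed

lemma gtype_subset_if_saturated_split:
  assumes P: "P \<subseteq> Y" "P \<noteq> {}" "P \<noteq> Y" "saturated P"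
    and cross: "\<And>u v. u \<in> P \<Longrightarrow> v \<in> Y - P \<Longrightarrow> d u v = w \<and> d v u = w"
  shows "gtype V d Y \<subseteq> {w}"
proof
  fix x assume "x \<in> gtype V d Y"
  then obtain u v where uv: "u \<in> Y" "v \<in> Y" "\<not> eqv u v" and x: "x = d u v"
    unfolding gtype_eq by blast
  let ?K = "{v. (linked w)\<^sup>*\<^sup>* u v}"
  have link_P: "y \<in> P \<longleftrightarrow> z \<in> P" if "linked w y z" for y z
    using that P(4) cross[of y z] cross[of z y] eqv_sym unfolding linked_def saturated_def by blast
  have "v \<in> P \<longleftrightarrow> u \<in> P" if "(linked w)\<^sup>*\<^sup>* u v" for v
    using that by (induction rule: rtranclp_induct) (use link_P in auto)
  then have "?K \<noteq> Y" using P by blast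
  then have "?K \<subset> Y" using linked_class_subset uv(1) by blast
  moreover have "u \<in> ?K" by simp
  ultimately have "\<not> linked w u v"
    using uv eqvI[OF strong_module_linked_class[OF uv(1)]] by (metis mem_Collect_eq r_into_rtranclp)
  then show "x \<in> {w}" using uv x unfolding linked_def by simp
qed

section \<open>Covers of a strong module by two saturated modules\<close>

definition saturated_cover :: "'a set \<Rightarrow> 'a set \<Rightarrow> bool" where
  "saturated_cover M N \<longleftrightarrow> is_module V d M \<and> is_module V d N \<and> saturated M \<and> saturated N \<and>
     M \<union> N = Y \<and> M - N \<noteq> {} \<and> N - M \<noteq> {}"

lemma saturated_cover_components:
  assumes "u1 \<in> Y" "u2 \<in> Y" "\<not> eqv u1 u2" "\<And>y. y \<in> Y \<Longrightarrow> eqv u1 y \<or> eqv u2 y"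
  shows "saturated_cover (component u1) (component u2)"
proof -
  have "u1 \<notin> component u2" "u2 \<notin> component u1"
    using assms(3) eqv_sym unfolding component_def by blast+
  moreover have "component u1 \<union> component u2 = Y"
    using assms(4) component_subset unfolding component_def by blast
  ultimately show ?thesis
    unfolding saturated_cover_def
    using assms(1,2) is_module_component saturated_component component_self by blast
qed

lemma max_module_subset_Y:
  assumes "a \<in> Y" "y \<in> Y" "a \<noteq> y"
  shows "max_module V d a y \<subseteq> Y"
  using strong_moduleD[OF strong_Y is_module_max_module[of V d a y]] assms Y_subset
    max_module_mem[of a V y d] max_module_not_mem[of y V d a] by blast

lemma saturated_cover_max_modules:
  assumes "m \<in> Y" "y \<in> Y" "m \<noteq> y" and sat_M: "saturated (max_module V d m y)"
    and d0: "d0 \<in> max_module V d m y" "d0 \<in> max_module V d y m"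
  shows "saturated_cover (max_module V d m y) (max_module V d y m)"
proof -
  let ?M = "max_module V d m y" and ?N = "max_module V d y m"
  have mV: "m \<in> V" and yV: "y \<in> V" using assms Y_subset by blast+
  have M: "is_module V d ?M" "?M \<subseteq> Y" "m \<in> ?M" "y \<notin> ?M"
    and N: "is_module V d ?N" "?N \<subseteq> Y" "y \<in> ?N" "m \<notin> ?N"
    using max_module_subset_Y assms max_module_mem[OF mV] max_module_mem[OF yV, of m]
    by (simp_all add: is_module_max_module max_module_not_mem)
  have "\<not> eqv m y" "\<not> eqv y d0"
    using sat_M M(3,4) d0(1) eqv_sym unfolding saturated_def by blast+
  moreover have "strong_module V d (?M \<union> ?N)"
    using strong_module_max_module_Un[OF mV yV \<open>m \<noteq> y\<close>] d0 by blast
  ultimately have "?M \<union> ?N = Y"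
    using eqvI[of "?M \<union> ?N" m y] M N by blast
  moreover have "saturated ?N"
    using saturated_if_module[OF N(1) N(3) d0(2) \<open>\<not> eqv y d0\<close>] .
  ultimately show ?thesis
    unfolding saturated_cover_def using M N sat_M by blast
qed

lemma saturated_cover_from_module:
  assumes A: "is_module V d A" "A \<subseteq> Y" and a: "a \<in> A" and c: "c \<in> A" "\<not> eqv a c"
    and y: "y \<in> Y" "y \<notin> A"
  shows "\<exists>M N. saturated_cover M N"
proof -
  \<comment> \<open>M is the largest module containing a but not y. It is not strong, and a module D
    overlapping it contains y; for m \<in> M - D, the largest module N containing y but not m
    meets M in D.\<close>
  have "a \<in> Y" "a \<noteq> y" using A a y by blast+
  let ?M = "max_module V d a y"
  have M: "is_module V d ?M" "?M \<subseteq> Y" "y \<notin> ?M"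
    using max_module_subset_Y[OF \<open>a \<in> Y\<close> y(1) \<open>a \<noteq> y\<close>]
    by (simp_all add: is_module_max_module max_module_not_mem)
  have "A \<subseteq> ?M" using max_module_greatest[OF A(1) a y(2)] .
  then have sat_M: "saturated ?M" using saturated_if_module[OF M(1)] a c by blast
  have "\<not> strong_module V d ?M"
    using eqvI[of ?M a c] M \<open>A \<subseteq> ?M\<close> a c y(1) by blast
  then obtain D where D: "is_module V d D" "\<not> (?M \<subseteq> D \<or> D \<subseteq> ?M \<or> ?M \<inter> D = {})"
    unfolding strong_module_def using M(1) by blast
  have "y \<in> D"
  proof (rule ccontr)
    assume "y \<notin> D"
    then have "?M \<union> D \<subseteq> ?M"
      using max_module_greatest[OF is_module_Un[OF M(1) D(1)], of a y] D(2) M(3)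
        \<open>A \<subseteq> ?M\<close> a by blast
    then show False using D(2) by blast
  qed
  obtain m d0 where m: "m \<in> ?M" "m \<notin> D" and d0: "d0 \<in> ?M" "d0 \<in> D" using D(2) by blast
  have "m \<in> Y" "m \<noteq> y" using m M by blast+
  have "max_module V d m y = ?M"
    using max_module_eq[OF m(1)] \<open>a \<in> Y\<close> \<open>a \<noteq> y\<close> Y_subset by blast
  moreover have "D \<subseteq> max_module V d y m"
    using max_module_greatest[OF D(1) \<open>y \<in> D\<close> m(2)] .
  ultimately have "saturated_cover (max_module V d m y) (max_module V d y m)"
    using saturated_cover_max_modules[OF \<open>m \<in> Y\<close> y(1) \<open>m \<noteq> y\<close>] sat_M d0 by auto
  then show ?thesis by blast
qed

lemma component_mem_if_mem_Union:
  assumes "\<A> \<subseteq> components V d Y" "u \<in> \<Union>\<A>"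
  shows "component u \<in> \<A>" "u \<in> Y"
proof -
  obtain u0 where "u0 \<in> Y" "component u0 \<in> \<A>" "u \<in> component u0"
    using assms unfolding components_eq by blast
  then show "component u \<in> \<A>" "u \<in> Y"
    using component_eq[of u0 u] component_subset unfolding component_def by auto
qed

lemma is_module_Union_quotient:
  assumes Q: "is_module (components V d Y) (dset d) \<A>"
  shows "is_module V d (\<Union>\<A>)"
proof (rule is_moduleI)
  have sub: "\<A> \<subseteq> components V d Y" using Q by (rule is_module_subset)
  then show "\<Union>\<A> \<subseteq> V" using component_mem_if_mem_Union(2) Y_subset by blast
  fix z u u' assume z: "z \<in> V" "z \<notin> \<Union>\<A>" and u: "u \<in> \<Union>\<A>" "u' \<in> \<Union>\<A>"
  note u_in = component_mem_if_mem_Union[OF sub u(1)] component_mem_if_mem_Union[OF sub u(2)]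
  show "d z u = d z u' \<and> d u z = d u' z"
  proof (cases "z \<in> Y")
    case False
    then show ?thesis using is_moduleD[OF module_Y z(1) False] u_in by blast
  next
    case True
    have z_out: "component z \<in> components V d Y" "component z \<notin> \<A>"
      using True z(2) component_self unfolding components_eq by blast+
    have "\<not> eqv z v \<and> \<not> eqv v z" if "component v \<in> \<A>" for v
      using that z_out(2) component_eq[of z v] component_eq[of v z] by auto
    then have "dset d (component z) (component v) = d z v"
      "dset d (component v) (component z) = d v z" if "component v \<in> \<A>" "v \<in> Y" for v
      using that dset_components[OF True] dset_components[OF _ True] by blast+
    then show ?thesis
      using is_moduleD[OF Q z_out u_in(1) u_in(3)] u_in by simp
  qed
qed

lemma saturated_cover_if_not_prime:
  assumes "\<not> gallai_prime V d Y" and u: "u1 \<in> Y" "u2 \<in> Y" "\<not> eqv u1 u2"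
  shows "\<exists>M N. saturated_cover M N"
proof -
  let ?C = "components V d Y"
  from assms(1) consider
      "\<forall>I J K. I \<in> ?C \<longrightarrow> J \<in> ?C \<longrightarrow> K \<in> ?C \<longrightarrow> I = J \<or> I = K \<or> J = K"
    | \<A> where "is_module ?C (dset d) \<A>" "\<A> \<noteq> {}" "\<forall>I. \<A> \<noteq> {I}" "\<A> \<noteq> ?C"
    unfolding gallai_prime_def Let_def by blast
  then show ?thesis
  proof cases
    case 1
    have "eqv u1 y \<or> eqv u2 y" if "y \<in> Y" for y
    proof -
      have "component u1 = component u2 \<or> component u1 = component y \<or> component u2 = component y"
        using 1 u that unfolding components_eq by blast
      moreover have "component u1 \<noteq> component u2"
        using u component_self[OF u(2)] unfolding component_def by blast
      ultimately show ?thesis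
        using component_self[OF that] unfolding component_def by blast
    qed
    then show ?thesis using saturated_cover_components[OF u] by blast
  next
    case (2 \<A>)
    have sub: "\<A> \<subseteq> ?C" using 2(1) by (rule is_module_subset)
    then have sub': "\<A> \<subseteq> component ` Y" by (simp only: components_eq)
    obtain I where "I \<in> \<A>" using 2(2) by blast
    then obtain a where "a \<in> Y" and a: "component a \<in> \<A>" using sub' by auto
    obtain J where "J \<in> \<A>" "J \<noteq> component a" using 2(3) a by blast
    then obtain c where "c \<in> Y" and c: "component c \<in> \<A>" "component a \<noteq> component c"
      using sub' by blast
    obtain K where "K \<in> component ` Y" "K \<notin> \<A>" using 2(4) sub' unfolding components_eq by blast
    then obtain y where "y \<in> Y" and y: "component y \<notin> \<A>" by auto
    have "\<Union>\<A> \<subseteq> Y" using component_mem_if_mem_Union(2)[OF sub] by blast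
    moreover have "a \<in> \<Union>\<A>" "c \<in> \<Union>\<A>" "\<not> eqv a c"
      using a c component_self[OF \<open>a \<in> Y\<close>] component_self[OF \<open>c \<in> Y\<close>] component_eq
      by blast+
    moreover have "y \<notin> \<Union>\<A>" using y component_mem_if_mem_Union(1)[OF sub] by blast
    ultimately show ?thesis
      using saturated_cover_from_module[OF is_module_Union_quotient[OF 2(1)]] \<open>y \<in> Y\<close> by blast
  qed
qed

lemma not_module_Un_if_cut:
  assumes X: "is_module V d X" "X \<inter> Y = {}" "X \<noteq> {}"
    and U: "U \<subseteq> Y" "U \<noteq> {}" "U \<noteq> Y"
    and cut: "\<And>u z. u \<in> U \<Longrightarrow> z \<in> Y - U \<Longrightarrow> d u z = dset d X Y \<and> d z u = dset d Y X"
  shows "\<not> is_module V d (X \<union> Y)"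
proof
  assume XY: "is_module V d (X \<union> Y)"
  have "is_module V d (X \<union> U)"
  proof (rule is_moduleI)
    show "X \<union> U \<subseteq> V" using is_module_subset[OF X(1)] U(1) Y_subset by blast
  next
    fix z u u' assume z: "z \<in> V" "z \<notin> X \<union> U" and u: "u \<in> X \<union> U" "u' \<in> X \<union> U"
    show "d z u = d z u' \<and> d u z = d u' z"
    proof (cases "z \<in> Y")
      case False
      with z u U(1) show ?thesis using is_moduleD[OF XY z(1)] by blast
    next
      case True
      have "X \<inter> Y = {}" "Y \<inter> X = {}" using X(2) by blast+
      then have "d z v = dset d Y X \<and> d v z = dset d X Y" if "v \<in> X \<union> U" for v
        using that True z cut[of v z] dset_modules[OF X(1) module_Y, of v z]
          dset_modules[OF module_Y X(1), of z v] by auto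
      then show ?thesis using u by simp
    qed
  qed
  then show False
    using strong_moduleD[OF strong_Y] U X(2,3) by blast
qed

lemma saturated_cover_commute: "saturated_cover M N \<Longrightarrow> saturated_cover N M"
  unfolding saturated_cover_def by blast

lemma saturated_cover_crossing_values:
  assumes type: "gtype V d Y = {w1, w2}" and cover: "saturated_cover M N"
    and p: "p \<in> M" "p \<notin> N" and s: "s \<in> N" "s \<notin> M"
  shows "d p s = w1 \<and> d s p = w2 \<or> d p s = w2 \<and> d s p = w1"
proof -
  have M: "is_module V d M" "saturated M" and N: "is_module V d N" "saturated N"
    and "M \<union> N = Y" using cover unfolding saturated_cover_def by blast+
  have "p \<in> Y" "s \<in> Y" "\<not> eqv p s" "\<not> eqv s p"
    using p s \<open>M \<union> N = Y\<close> M(2) N(2) unfolding saturated_def by blast+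
  then have in_type: "d p s \<in> gtype V d Y" "d s p \<in> gtype V d Y"
    unfolding gtype_eq by blast+
  show ?thesis
  proof (cases "d p s = d s p")
    case True
    have "gtype V d Y \<subseteq> {d p s}"
    proof (rule gtype_subset_if_saturated_split)
      show "M - N \<subseteq> Y" "M - N \<noteq> {}" "M - N \<noteq> Y" "saturated (M - N)"
        using p s \<open>M \<union> N = Y\<close> saturated_Diff[OF M(2) N(2)] by blast+
      show "d u v = d p s \<and> d v u = d p s" if "u \<in> M - N" "v \<in> Y - (M - N)" for u v
      proof -
        have "v \<in> N" using that \<open>M \<union> N = Y\<close> by blast
        then show ?thesis using d_across_modules[OF M(1) N(1) _ _ _ p s, of u v] that True by simp
      qed
    qed
    then have "w1 = d p s" "w2 = d p s" using type by blast+
    then show ?thesis using True by simp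
  next
    case False
    then show ?thesis using in_type unfolding type by auto
  qed
qed

lemma not_module_Un_if_saturated_cover:
  assumes X: "is_module V d X" "X \<inter> Y = {}" "X \<noteq> {}"
    and cover: "saturated_cover M N" and p: "p \<in> M" "p \<notin> N" and s: "s \<in> N" "s \<notin> M"
    and crossing: "d p s = dset d X Y" "d s p = dset d Y X"
  shows "\<not> is_module V d (X \<union> Y)"
proof (rule not_module_Un_if_cut[OF X])
  have M: "is_module V d M" and N: "is_module V d N" and "M \<union> N = Y"
    using cover unfolding saturated_cover_def by blast+
  then show "M - N \<subseteq> Y" "M - N \<noteq> {}" "M - N \<noteq> Y" using p s by blast+
  fix u z assume "u \<in> M - N" "z \<in> Y - (M - N)"
  moreover from this have "z \<in> N" using \<open>M \<union> N = Y\<close> by blast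
  ultimately show "d u z = dset d X Y \<and> d z u = dset d Y X"
    using d_across_modules[OF M N _ _ _ p s, of u z] crossing by simp
qed

end

theorem lemma6p9:
  fixes V :: "'a set" and d :: "'a \<Rightarrow> 'a \<Rightarrow> 'w" and X Y :: "'a set"
  assumes "is_module V d X" and "is_module V d Y"
    and "X \<inter> Y = {}" and "X \<noteq> {}" and "Y \<noteq> {}"
    and "robust_module V d Y"
    and "\<exists>a\<in>Y. \<exists>b\<in>Y. a \<noteq> b"
    and "\<not> gallai_prime V d Y"
    and "{dset d X Y, dset d Y X} = gtype V d Y"
  shows "\<not> is_module V d (X \<union> Y)"
proof -
  interpret gallai_decomposition V d Y
    using robust_module_imp_strong[OF assms(6)] by unfold_locales
  \<comment> \<open>the hypotheses that Y is a module with two elements follow from robustness and t(Y) \<noteq> {}\<close>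
  obtain u1 u2 where "u1 \<in> Y" "u2 \<in> Y" "\<not> eqv u1 u2"
    using assms(9) unfolding gtype_eq by blast
  then obtain M N where cover: "saturated_cover M N"
    using saturated_cover_if_not_prime[OF assms(8)] by blast
  then obtain p s where p: "p \<in> M" "p \<notin> N" and s: "s \<in> N" "s \<notin> M"
    unfolding saturated_cover_def by blast
  from saturated_cover_crossing_values[OF assms(9)[symmetric] cover p s] show ?thesis
  proof
    assume "d p s = dset d X Y \<and> d s p = dset d Y X"
    then show ?thesis using not_module_Un_if_saturated_cover[OF assms(1,3,4) cover p s] by blast
  next
    assume "d p s = dset d Y X \<and> d s p = dset d X Y"
    then show ?thesis
      using not_module_Un_if_saturated_cover[OF assms(1,3,4) saturated_cover_commute[OF cover] s p]
      by blast
  qed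
qed

end
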